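(* Let $i\in\{1,2,3',3'',4\}$. For every $G\in\mathcal{G}_i$ there exists a finite topology $\tau$ on $V(G)$ such that $G_i(\tau)\cong G$ and $m_\tau(x)\ne m_\tau(y)$ for all distinct $x,y\in V(G)$.
   Context: A finite topology $\tau$ on a finite set $X$ is a family of subsets of $X$ (open sets) containing $\emptyset,X$ and closed under unions and intersections; complements of open sets are closed. $m_\tau(x)$ is the intersection of all open sets containing $x$. Separation of distinct $x,y$: $T_1$-separated if there are open $U_x,U_y$ with $x\in U_x\not\ni y$, $y\in U_y\not\ni x$; $T_2$-separated if they have disjoint open neighborhoods; with (a): exist closed $J$, open $U_J,U_y$, $x\in J\subseteq U_J$, $y\in U_y$, $U_J\cap U_y=\emptyset$, and (b): exist closed $K$, open $U_x,U_K$, $x\in U_x$, $y\in K\subseteq U_K$, $U_x\cap U_K=\emptyset$: $T_{3'}$-separated if (a) or (b), $T_{3''}$-separated if (a) and (b); $T_4$-separated if there exist closed $J\ni x$, $K\ni y$ and disjoint open $U_J\supseteq J$, $U_K\supseteq K$. $G_i(\tau)$ is the simple graph on $X$ where distinct $x,y$ are adjacent iff not $T_i$-separated; $\mathcal{G}_i$ is the class of graphs isomorphic to some $G_i(\tau)$ with $\tau$ a finite topology. *)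

theory Defs
  imports Main
begin

definition finite_topology :: "'a set \<Rightarrow> 'a set set \<Rightarrow> bool" where
  "finite_topology X \<tau> \<longleftrightarrow> finite X \<and> \<tau> \<subseteq> Pow X \<and> {} \<in> \<tau> \<and> X \<in> \<tau> \<and>
     (\<forall>U\<in>\<tau>. \<forall>W\<in>\<tau>. U \<union> W \<in> \<tau> \<and> U \<inter> W \<in> \<tau>)"

definition closed_in_top :: "'a set \<Rightarrow> 'a set set \<Rightarrow> 'a set \<Rightarrow> bool" where
  "closed_in_top X \<tau> K \<longleftrightarrow> K \<subseteq> X \<and> X - K \<in> \<tau>"

definition minimal_open :: "'a set set \<Rightarrow> 'a \<Rightarrow> 'a set" where
  "minimal_open \<tau> x = \<Inter> {U \<in> \<tau>. x \<in> U}"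

datatype sep_axiom = T1 | T2 | T3' | T3'' | T4

definition T3a_sep :: "'a set \<Rightarrow> 'a set set \<Rightarrow> 'a \<Rightarrow> 'a \<Rightarrow> bool" where
  "T3a_sep X \<tau> x y \<longleftrightarrow> (\<exists>J UJ Uy. closed_in_top X \<tau> J \<and> UJ \<in> \<tau> \<and> Uy \<in> \<tau> \<and>
      x \<in> J \<and> J \<subseteq> UJ \<and> y \<in> Uy \<and> UJ \<inter> Uy = {})"

definition T3b_sep :: "'a set \<Rightarrow> 'a set set \<Rightarrow> 'a \<Rightarrow> 'a \<Rightarrow> bool" where
  "T3b_sep X \<tau> x y \<longleftrightarrow> (\<exists>K Ux UK. closed_in_top X \<tau> K \<and> Ux \<in> \<tau> \<and> UK \<in> \<tau> \<and>
      x \<in> Ux \<and> y \<in> K \<and> K \<subseteq> UK \<and> Ux \<inter> UK = {})"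

fun separated :: "sep_axiom \<Rightarrow> 'a set \<Rightarrow> 'a set set \<Rightarrow> 'a \<Rightarrow> 'a \<Rightarrow> bool" where
  "separated T1 X \<tau> x y \<longleftrightarrow>
     (\<exists>Ux Uy. Ux \<in> \<tau> \<and> Uy \<in> \<tau> \<and> x \<in> Ux \<and> y \<notin> Ux \<and> y \<in> Uy \<and> x \<notin> Uy)"
| "separated T2 X \<tau> x y \<longleftrightarrow>
     (\<exists>Ux Uy. Ux \<in> \<tau> \<and> Uy \<in> \<tau> \<and> x \<in> Ux \<and> y \<in> Uy \<and> Ux \<inter> Uy = {})"
| "separated T3' X \<tau> x y \<longleftrightarrow> T3a_sep X \<tau> x y \<or> T3b_sep X \<tau> x y"
| "separated T3'' X \<tau> x y \<longleftrightarrow> T3a_sep X \<tau> x y \<and> T3b_sep X \<tau> x y"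
| "separated T4 X \<tau> x y \<longleftrightarrow>
     (\<exists>J K UJ UK. closed_in_top X \<tau> J \<and> closed_in_top X \<tau> K \<and> UJ \<in> \<tau> \<and> UK \<in> \<tau> \<and>
        x \<in> J \<and> y \<in> K \<and> J \<subseteq> UJ \<and> K \<subseteq> UK \<and> UJ \<inter> UK = {})"

(* Simple graphs are given as a vertex set V with an adjacency relation E (only its
   restriction to V matters). G_i(tau) has vertex set X and adjacency below. *)
definition Gi_adj :: "sep_axiom \<Rightarrow> 'a set \<Rightarrow> 'a set set \<Rightarrow> 'a \<Rightarrow> 'a \<Rightarrow> bool" where
  "Gi_adj i X \<tau> x y \<longleftrightarrow> x \<noteq> y \<and> \<not> separated i X \<tau> x y"

definition simple_graph :: "'a set \<Rightarrow> ('a \<Rightarrow> 'a \<Rightarrow> bool) \<Rightarrow> bool" where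
  "simple_graph V E \<longleftrightarrow> finite V \<and> (\<forall>x\<in>V. \<not> E x x) \<and> (\<forall>x\<in>V. \<forall>y\<in>V. E x y \<longleftrightarrow> E y x)"

definition graph_iso :: "'a set \<Rightarrow> ('a \<Rightarrow> 'a \<Rightarrow> bool) \<Rightarrow> 'b set \<Rightarrow> ('b \<Rightarrow> 'b \<Rightarrow> bool) \<Rightarrow> bool" where
  "graph_iso V1 E1 V2 E2 \<longleftrightarrow> (\<exists>f. bij_betw f V1 V2 \<and> (\<forall>x\<in>V1. \<forall>y\<in>V1. E1 x y \<longleftrightarrow> E2 (f x) (f y)))"

end

theory Submission
  imports Defs
begin

(* A finite topology \<sigma> is the down-set topology of its specialization preorder
   (w below z iff w \<in> m(z)). Breaking the ties of this preorder by an injective ranking of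
   the points gives a partial order whose down-set topology is finer than \<sigma> and T0, so its
   minimal open sets are pairwise distinct. It separates exactly the pairs \<sigma> separates.
   T1-separation of x and y only says that neither lies in the minimal open set of the other,
   which tie-breaking does not change. The other axioms are witnessed by disjoint open sets,
   and taking \<sigma>-open hulls keeps new open sets disjoint: if w lies in both hulls, the point of
   least rank among those indistinguishable from w lies below every point above w, hence in
   both new open sets; a new closed set around z is replaced by the \<sigma>-closure of z.
   Transporting \<sigma> to V along the graph isomorphism finishes the proof. *)

lemma finite_topology_Inter:
  assumes "finite_topology X \<sigma>" "F \<subseteq> \<sigma>" "F \<noteq> {}"
  shows "\<Inter>F \<in> \<sigma>"
proof -
  have "finite F"
    using assms(1,2) unfolding finite_topology_def by (meson finite_Pow_iff finite_subset)
  from this assms(3,2) show ?thesis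
    by (induction F rule: finite_ne_induct) (use assms(1) in \<open>auto simp: finite_topology_def\<close>)
qed

lemma finite_topology_Union:
  assumes "finite_topology X \<sigma>" "F \<subseteq> \<sigma>"
  shows "\<Union>F \<in> \<sigma>"
proof -
  have "finite F"
    using assms unfolding finite_topology_def by (meson finite_Pow_iff finite_subset)
  from this assms(2) show ?thesis
    by (induction F rule: finite_induct) (use assms(1) in \<open>auto simp: finite_topology_def\<close>)
qed

lemma minimal_open_self: "z \<in> minimal_open \<sigma> z"
  unfolding minimal_open_def by blast

lemma minimal_open_subset: "U \<in> \<sigma> \<Longrightarrow> z \<in> U \<Longrightarrow> minimal_open \<sigma> z \<subseteq> U"
  unfolding minimal_open_def by blast

lemma minimal_open_trans:
  "w \<in> minimal_open \<sigma> z \<Longrightarrow> z \<in> minimal_open \<sigma> v \<Longrightarrow> w \<in> minimal_open \<sigma> v"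
  unfolding minimal_open_def by blast

lemma minimal_open_in: "finite_topology X \<sigma> \<Longrightarrow> z \<in> X \<Longrightarrow> minimal_open \<sigma> z \<in> \<sigma>"
  unfolding minimal_open_def by (rule finite_topology_Inter) (auto simp: finite_topology_def)

lemma minimal_open_subset_space: "finite_topology X \<sigma> \<Longrightarrow> z \<in> X \<Longrightarrow> minimal_open \<sigma> z \<subseteq> X"
  by (rule minimal_open_subset) (auto simp: finite_topology_def)

lemma separated_T1_iff:
  assumes "finite_topology X \<sigma>" "x \<in> X" "y \<in> X"
  shows "separated T1 X \<sigma> x y \<longleftrightarrow> y \<notin> minimal_open \<sigma> x \<and> x \<notin> minimal_open \<sigma> y"
proof
  assume "separated T1 X \<sigma> x y"
  then obtain Ux Uy where "Ux \<in> \<sigma>" "Uy \<in> \<sigma>" "x \<in> Ux" "y \<notin> Ux" "y \<in> Uy" "x \<notin> Uy"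
    by auto
  then show "y \<notin> minimal_open \<sigma> x \<and> x \<notin> minimal_open \<sigma> y"
    using minimal_open_subset[of Ux \<sigma> x] minimal_open_subset[of Uy \<sigma> y] by blast
next
  assume "y \<notin> minimal_open \<sigma> x \<and> x \<notin> minimal_open \<sigma> y"
  moreover have "minimal_open \<sigma> x \<in> \<sigma>" "minimal_open \<sigma> y \<in> \<sigma>"
    using minimal_open_in[OF assms(1)] assms(2,3) by blast+
  ultimately show "separated T1 X \<sigma> x y"
    using minimal_open_self[of x \<sigma>] minimal_open_self[of y \<sigma>] by (simp only: separated.simps) blast
qed

locale separation_transfer =
  fixes X :: "'a set" and \<tau> :: "'a set set" and Y :: "'b set" and \<tau>' :: "'b set set"
    and h :: "'a \<Rightarrow> 'b" and \<Phi> :: "'a set \<Rightarrow> 'b set"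
  assumes open_map: "U \<in> \<tau> \<Longrightarrow> \<Phi> U \<in> \<tau>'"
    and image_subset_open_map: "U \<in> \<tau> \<Longrightarrow> h ` U \<subseteq> \<Phi> U"
    and open_map_disjoint: "U \<in> \<tau> \<Longrightarrow> W \<in> \<tau> \<Longrightarrow> U \<inter> W = {} \<Longrightarrow> \<Phi> U \<inter> \<Phi> W = {}"
    and closed_map: "closed_in_top X \<tau> J \<Longrightarrow> z \<in> J \<Longrightarrow>
      \<exists>J'. closed_in_top Y \<tau>' J' \<and> h z \<in> J' \<and> (\<forall>U\<in>\<tau>. J \<subseteq> U \<longrightarrow> J' \<subseteq> \<Phi> U)"
begin

lemma T3a_sep_transfer:
  assumes "T3a_sep X \<tau> x y"
  shows "T3a_sep Y \<tau>' (h x) (h y)"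
proof -
  obtain J UJ Uy where J: "closed_in_top X \<tau> J" "UJ \<in> \<tau>" "Uy \<in> \<tau>"
    "x \<in> J" "J \<subseteq> UJ" "y \<in> Uy" "UJ \<inter> Uy = {}"
    using assms unfolding T3a_sep_def by blast
  obtain J' where "closed_in_top Y \<tau>' J'" "h x \<in> J'" "J' \<subseteq> \<Phi> UJ"
    using closed_map[OF J(1,4)] J(2,5) by blast
  moreover have "\<Phi> UJ \<in> \<tau>'" "\<Phi> Uy \<in> \<tau>'" "h y \<in> \<Phi> Uy" "\<Phi> UJ \<inter> \<Phi> Uy = {}"
    using open_map image_subset_open_map open_map_disjoint J by blast+
  ultimately show ?thesis unfolding T3a_sep_def by blast
qed

lemma T3b_sep_transfer:
  assumes "T3b_sep X \<tau> x y"
  shows "T3b_sep Y \<tau>' (h x) (h y)"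
proof -
  obtain K Ux UK where K: "closed_in_top X \<tau> K" "Ux \<in> \<tau>" "UK \<in> \<tau>"
    "x \<in> Ux" "y \<in> K" "K \<subseteq> UK" "Ux \<inter> UK = {}"
    using assms unfolding T3b_sep_def by blast
  obtain K' where "closed_in_top Y \<tau>' K'" "h y \<in> K'" "K' \<subseteq> \<Phi> UK"
    using closed_map[OF K(1,5)] K(3,6) by blast
  moreover have "\<Phi> Ux \<in> \<tau>'" "\<Phi> UK \<in> \<tau>'" "h x \<in> \<Phi> Ux" "\<Phi> Ux \<inter> \<Phi> UK = {}"
    using open_map image_subset_open_map open_map_disjoint K by blast+
  ultimately show ?thesis unfolding T3b_sep_def by blast
qed

lemma separated_transfer:
  assumes "i \<noteq> T1" "separated i X \<tau> x y"
  shows "separated i Y \<tau>' (h x) (h y)"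
proof (cases i)
  case T2
  then obtain Ux Uy where "Ux \<in> \<tau>" "Uy \<in> \<tau>" "x \<in> Ux" "y \<in> Uy" "Ux \<inter> Uy = {}"
    using assms(2) by auto
  then have "\<Phi> Ux \<in> \<tau>'" "\<Phi> Uy \<in> \<tau>'" "h x \<in> \<Phi> Ux" "h y \<in> \<Phi> Uy" "\<Phi> Ux \<inter> \<Phi> Uy = {}"
    using open_map image_subset_open_map open_map_disjoint by blast+
  then show ?thesis using T2 by auto
next
  case T4
  then obtain J K UJ UK where JK: "closed_in_top X \<tau> J" "closed_in_top X \<tau> K"
      "UJ \<in> \<tau>" "UK \<in> \<tau>" "x \<in> J" "y \<in> K" "J \<subseteq> UJ" "K \<subseteq> UK" "UJ \<inter> UK = {}"
    using assms(2) by auto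
  obtain J' where "closed_in_top Y \<tau>' J'" "h x \<in> J'" "J' \<subseteq> \<Phi> UJ"
    using closed_map[OF JK(1,5)] JK(3,7) by blast
  moreover obtain K' where "closed_in_top Y \<tau>' K'" "h y \<in> K'" "K' \<subseteq> \<Phi> UK"
    using closed_map[OF JK(2,6)] JK(4,8) by blast
  moreover have "\<Phi> UJ \<in> \<tau>'" "\<Phi> UK \<in> \<tau>'" "\<Phi> UJ \<inter> \<Phi> UK = {}"
    using open_map open_map_disjoint JK by blast+
  ultimately show ?thesis using T4 by auto
qed (use assms T3a_sep_transfer T3b_sep_transfer in auto)

end

locale strict_separation_transfer = separation_transfer +
  assumes open_map_avoids: "U \<in> \<tau> \<Longrightarrow> z \<in> X \<Longrightarrow> z \<notin> U \<Longrightarrow> h z \<notin> \<Phi> U"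
begin

lemma separated_strict_transfer:
  assumes "x \<in> X" "y \<in> X" "separated i X \<tau> x y"
  shows "separated i Y \<tau>' (h x) (h y)"
proof (cases "i = T1")
  case True
  then obtain Ux Uy where "Ux \<in> \<tau>" "Uy \<in> \<tau>" "x \<in> Ux" "y \<notin> Ux" "y \<in> Uy" "x \<notin> Uy"
    using assms(3) by auto
  then have "\<Phi> Ux \<in> \<tau>'" "\<Phi> Uy \<in> \<tau>'" "h x \<in> \<Phi> Ux" "h y \<notin> \<Phi> Ux" "h y \<in> \<Phi> Uy" "h x \<notin> \<Phi> Uy"
    using open_map image_subset_open_map open_map_avoids assms(1,2) by blast+
  then show ?thesis using True by auto
qed (use assms separated_transfer in auto)

end

lemma separated_mono:
  assumes "\<sigma> \<subseteq> \<tau>" "x \<in> X" "y \<in> X" "separated i X \<sigma> x y"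
  shows "separated i X \<tau> x y"
proof -
  interpret strict_separation_transfer X \<sigma> X \<tau> id id
    by unfold_locales (use assms(1) in \<open>auto simp: closed_in_top_def\<close>)
  show ?thesis using separated_strict_transfer[OF assms(2-4)] by simp
qed

lemma finite_topology_image:
  assumes "finite_topology X \<sigma>" "inj_on f X"
  shows "finite_topology (f ` X) ((`) f ` \<sigma>)"
  unfolding finite_topology_def
proof (intro conjI ballI)
  have \<sigma>X: "\<sigma> \<subseteq> Pow X" using assms(1) unfolding finite_topology_def by blast
  show "finite (f ` X)" "(`) f ` \<sigma> \<subseteq> Pow (f ` X)" "{} \<in> (`) f ` \<sigma>" "f ` X \<in> (`) f ` \<sigma>"
    using assms(1) \<sigma>X unfolding finite_topology_def by force+
  fix U' W' assume "U' \<in> (`) f ` \<sigma>" "W' \<in> (`) f ` \<sigma>"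
  then obtain U W where UW: "U \<in> \<sigma>" "W \<in> \<sigma>" "U' = f ` U" "W' = f ` W" by blast
  have "U \<union> W \<in> \<sigma>" "U \<inter> W \<in> \<sigma>" using UW assms(1) unfolding finite_topology_def by blast+
  moreover have "U' \<union> W' = f ` (U \<union> W)" "U' \<inter> W' = f ` (U \<inter> W)"
    using inj_on_image_Int[OF assms(2)] UW \<sigma>X by blast+
  ultimately show "U' \<union> W' \<in> (`) f ` \<sigma>" "U' \<inter> W' \<in> (`) f ` \<sigma>"
    by simp_all
qed

lemma separated_image:
  assumes f: "inj_on f X" and \<sigma>X: "\<sigma> \<subseteq> Pow X" and "x \<in> X" "y \<in> X" "separated i X \<sigma> x y"
  shows "separated i (f ` X) ((`) f ` \<sigma>) (f x) (f y)"
proof -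
  have closed_image: "closed_in_top (f ` X) ((`) f ` \<sigma>) (f ` J)" if "closed_in_top X \<sigma> J" for J
  proof -
    have "f ` X - f ` J = f ` (X - J)"
      using that inj_on_image_set_diff[OF f, of X J] unfolding closed_in_top_def by simp
    then show ?thesis using that unfolding closed_in_top_def by (simp add: image_mono)
  qed
  interpret strict_separation_transfer X \<sigma> "f ` X" "(`) f ` \<sigma>" f "(`) f"
  proof
    fix U W assume "U \<in> \<sigma>" "W \<in> \<sigma>" "U \<inter> W = {}"
    then show "f ` U \<inter> f ` W = {}" using inj_on_image_Int[OF f, of U W] \<sigma>X by auto
  next
    fix U z assume "U \<in> \<sigma>" "z \<in> X" "z \<notin> U"
    then show "f z \<notin> f ` U" using inj_on_image_mem_iff[OF f, of z U] \<sigma>X by auto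
  next
    fix J z assume "closed_in_top X \<sigma> J" "z \<in> J"
    then show "\<exists>J'. closed_in_top (f ` X) ((`) f ` \<sigma>) J' \<and> f z \<in> J' \<and>
        (\<forall>U\<in>\<sigma>. J \<subseteq> U \<longrightarrow> J' \<subseteq> f ` U)"
      using closed_image by (intro exI[of _ "f ` J"]) auto
  qed auto
  show ?thesis by (rule separated_strict_transfer[OF assms(3-5)])
qed

lemma separated_image_iff:
  assumes f: "inj_on f X" and \<sigma>X: "\<sigma> \<subseteq> Pow X" and x: "x \<in> X" and y: "y \<in> X"
  shows "separated i (f ` X) ((`) f ` \<sigma>) (f x) (f y) \<longleftrightarrow> separated i X \<sigma> x y"
proof
  assume sep: "separated i (f ` X) ((`) f ` \<sigma>) (f x) (f y)"
  define g where "g = inv_into X f"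
  have cancel: "g ` f ` U = U" if "U \<subseteq> X" for U
    unfolding g_def using f that by (rule inv_into_image_cancel)
  have "(`) g ` (`) f ` \<sigma> = (\<lambda>U. g ` f ` U) ` \<sigma>" by (rule image_image)
  also have "\<dots> = \<sigma>" using cancel \<sigma>X by (simp add: subset_iff)
  finally have g_back: "(`) g ` (`) f ` \<sigma> = \<sigma>" .
  have "inj_on g (f ` X)" "(`) f ` \<sigma> \<subseteq> Pow (f ` X)"
    unfolding g_def using \<sigma>X by (auto intro: inj_on_inv_into)
  from separated_image[OF this imageI[OF x] imageI[OF y] sep]
  have "separated i (g ` f ` X) ((`) g ` (`) f ` \<sigma>) (g (f x)) (g (f y))" .
  moreover have "g ` f ` X = X" using cancel by blast
  moreover have "g (f x) = x" "g (f y) = y" unfolding g_def using f x y by simp_all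
  ultimately show "separated i X \<sigma> x y" using g_back by simp
qed (rule separated_image[OF f \<sigma>X x y])

definition down_set_topology :: "'a set \<Rightarrow> ('a \<Rightarrow> 'a \<Rightarrow> bool) \<Rightarrow> 'a set set" where
  "down_set_topology X R = {U. U \<subseteq> X \<and> (\<forall>z\<in>U. \<forall>w\<in>X. R w z \<longrightarrow> w \<in> U)}"

lemma finite_topology_down_set_topology:
  "finite X \<Longrightarrow> finite_topology X (down_set_topology X R)"
  unfolding finite_topology_def down_set_topology_def by blast

lemma minimal_open_down_set_topology:
  assumes "transp R" "R z z" "z \<in> X"
  shows "minimal_open (down_set_topology X R) z = {w\<in>X. R w z}"
proof
  have "{w\<in>X. R w z} \<in> down_set_topology X R"
    using assms(1) unfolding down_set_topology_def transp_def by blast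
  moreover have "z \<in> {w\<in>X. R w z}" using assms(2,3) by simp
  ultimately show "minimal_open (down_set_topology X R) z \<subseteq> {w\<in>X. R w z}"
    by (rule minimal_open_subset)
  show "{w\<in>X. R w z} \<subseteq> minimal_open (down_set_topology X R) z"
    unfolding minimal_open_def down_set_topology_def by blast
qed

definition tiebreak_spec_le :: "'a set set \<Rightarrow> ('a \<Rightarrow> 'b::linorder) \<Rightarrow> 'a \<Rightarrow> 'a \<Rightarrow> bool" where
  "tiebreak_spec_le \<sigma> r w z \<longleftrightarrow>
     w \<in> minimal_open \<sigma> z \<and> (z \<in> minimal_open \<sigma> w \<longrightarrow> r w \<le> r z)"

definition tiebreak_topology :: "'a set \<Rightarrow> 'a set set \<Rightarrow> ('a \<Rightarrow> 'b::linorder) \<Rightarrow> 'a set set" where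
  "tiebreak_topology X \<sigma> r = down_set_topology X (tiebreak_spec_le \<sigma> r)"

lemma tiebreak_spec_le_refl: "tiebreak_spec_le \<sigma> r z z"
  unfolding tiebreak_spec_le_def by (simp add: minimal_open_self)

lemma transp_tiebreak_spec_le: "transp (tiebreak_spec_le \<sigma> r)"
proof (rule transpI)
  fix w z v assume wz: "tiebreak_spec_le \<sigma> r w z" and zv: "tiebreak_spec_le \<sigma> r z v"
  then have w_z: "w \<in> minimal_open \<sigma> z" and z_v: "z \<in> minimal_open \<sigma> v"
    unfolding tiebreak_spec_le_def by blast+
  have "r w \<le> r v" if v_w: "v \<in> minimal_open \<sigma> w"
  proof -
    have "z \<in> minimal_open \<sigma> w" using minimal_open_trans[OF z_v v_w] .
    moreover have "v \<in> minimal_open \<sigma> z" using minimal_open_trans[OF v_w w_z] .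
    ultimately show ?thesis using wz zv unfolding tiebreak_spec_le_def by auto
  qed
  then show "tiebreak_spec_le \<sigma> r w v"
    unfolding tiebreak_spec_le_def using minimal_open_trans[OF w_z z_v] by blast
qed

lemma tiebreak_spec_le_antisym:
  assumes "inj_on r X" "x \<in> X" "y \<in> X" "tiebreak_spec_le \<sigma> r x y" "tiebreak_spec_le \<sigma> r y x"
  shows "x = y"
proof -
  have "r x = r y" using assms(4,5) unfolding tiebreak_spec_le_def by auto
  then show ?thesis using inj_on_eq_iff[OF assms(1-3)] by simp
qed

lemma minimal_open_tiebreak_topology:
  "z \<in> X \<Longrightarrow> minimal_open (tiebreak_topology X \<sigma> r) z = {w\<in>X. tiebreak_spec_le \<sigma> r w z}"
  unfolding tiebreak_topology_def
  by (rule minimal_open_down_set_topology[OF transp_tiebreak_spec_le tiebreak_spec_le_refl])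

lemma finite_topology_tiebreak_topology:
  "finite_topology X \<sigma> \<Longrightarrow> finite_topology X (tiebreak_topology X \<sigma> r)"
  unfolding tiebreak_topology_def finite_topology_def[of X \<sigma>]
  by (simp add: finite_topology_down_set_topology)

lemma topology_subset_tiebreak_topology:
  assumes "finite_topology X \<sigma>"
  shows "\<sigma> \<subseteq> tiebreak_topology X \<sigma> r"
proof
  fix U assume U: "U \<in> \<sigma>"
  then have "U \<subseteq> X" using assms unfolding finite_topology_def by blast
  moreover have "w \<in> U" if "z \<in> U" "tiebreak_spec_le \<sigma> r w z" for w z
    using minimal_open_subset[OF U that(1)] that(2) unfolding tiebreak_spec_le_def by blast
  ultimately show "U \<in> tiebreak_topology X \<sigma> r"
    unfolding tiebreak_topology_def down_set_topology_def by blast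
qed

lemma exists_tiebreak_spec_le_below:
  assumes "finite_topology X \<sigma>" "w \<in> X"
  obtains d where "d \<in> X" "\<And>z. z \<in> X \<Longrightarrow> w \<in> minimal_open \<sigma> z \<Longrightarrow> tiebreak_spec_le \<sigma> r d z"
proof -
  define D where "D = {v\<in>X. v \<in> minimal_open \<sigma> w \<and> w \<in> minimal_open \<sigma> v}"
  define d where "d = arg_min_on r D"
  have "finite D" using assms(1) unfolding D_def finite_topology_def by simp
  moreover have "w \<in> D" using assms(2) minimal_open_self[of w \<sigma>] unfolding D_def by simp
  ultimately have d: "d \<in> D" and d_least: "\<And>v. v \<in> D \<Longrightarrow> r d \<le> r v"
    unfolding d_def using arg_min_if_finite(1) arg_min_least by fast+
  have "tiebreak_spec_le \<sigma> r d z" if z: "z \<in> X" "w \<in> minimal_open \<sigma> z" for z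
  proof -
    have d_w: "d \<in> minimal_open \<sigma> w" using d unfolding D_def by blast
    have "r d \<le> r z" if z_d: "z \<in> minimal_open \<sigma> d"
    proof -
      have "z \<in> minimal_open \<sigma> w" using minimal_open_trans[OF z_d d_w] .
      then have "z \<in> D" using z unfolding D_def by blast
      then show ?thesis by (rule d_least)
    qed
    then show ?thesis unfolding tiebreak_spec_le_def using minimal_open_trans[OF d_w z(2)] by blast
  qed
  moreover have "d \<in> X" using d unfolding D_def by blast
  ultimately show ?thesis using that by blast
qed

definition open_hull :: "'a set set \<Rightarrow> 'a set \<Rightarrow> 'a set" where
  "open_hull \<sigma> A = \<Union> (minimal_open \<sigma> ` A)"

lemma open_hull_in:
  assumes "finite_topology X \<sigma>" "A \<subseteq> X"
  shows "open_hull \<sigma> A \<in> \<sigma>"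
  unfolding open_hull_def
proof (rule finite_topology_Union[OF assms(1)])
  show "minimal_open \<sigma> ` A \<subseteq> \<sigma>" using minimal_open_in[OF assms(1)] assms(2) by blast
qed

lemma subset_open_hull: "A \<subseteq> open_hull \<sigma> A"
  unfolding open_hull_def using minimal_open_self by fast

lemma open_hull_disjoint:
  assumes \<sigma>: "finite_topology X \<sigma>"
    and U: "U \<in> tiebreak_topology X \<sigma> r" and W: "W \<in> tiebreak_topology X \<sigma> r" and "U \<inter> W = {}"
  shows "open_hull \<sigma> U \<inter> open_hull \<sigma> W = {}"
proof (rule ccontr)
  assume "open_hull \<sigma> U \<inter> open_hull \<sigma> W \<noteq> {}"
  then obtain w u v where uv: "u \<in> U" "v \<in> W" "w \<in> minimal_open \<sigma> u" "w \<in> minimal_open \<sigma> v"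
    unfolding open_hull_def by blast
  have "U \<subseteq> X" "W \<subseteq> X" using U W unfolding tiebreak_topology_def down_set_topology_def by blast+
  with uv have "u \<in> X" "v \<in> X" by blast+
  then have "w \<in> X" using minimal_open_subset_space[OF \<sigma>] uv(3) by blast
  then obtain d where "d \<in> X" "tiebreak_spec_le \<sigma> r d u" "tiebreak_spec_le \<sigma> r d v"
    using exists_tiebreak_spec_le_below[OF \<sigma>] \<open>u \<in> X\<close> \<open>v \<in> X\<close> uv(3,4) by metis
  then have "d \<in> U" "d \<in> W"
    using U W uv(1,2) unfolding tiebreak_topology_def down_set_topology_def by blast+
  then show False using \<open>U \<inter> W = {}\<close> by blast
qed

lemma closed_point_closure:
  assumes "finite_topology X \<sigma>"
  shows "closed_in_top X \<sigma> {v\<in>X. z \<in> minimal_open \<sigma> v}"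
proof -
  have "X - {v\<in>X. z \<in> minimal_open \<sigma> v} = open_hull \<sigma> {v\<in>X. z \<notin> minimal_open \<sigma> v}"
  proof
    show "X - {v\<in>X. z \<in> minimal_open \<sigma> v} \<subseteq> open_hull \<sigma> {v\<in>X. z \<notin> minimal_open \<sigma> v}"
      using subset_open_hull[of "{v\<in>X. z \<notin> minimal_open \<sigma> v}" \<sigma>] by blast
    show "open_hull \<sigma> {v\<in>X. z \<notin> minimal_open \<sigma> v} \<subseteq> X - {v\<in>X. z \<in> minimal_open \<sigma> v}"
    proof
      fix w assume "w \<in> open_hull \<sigma> {v\<in>X. z \<notin> minimal_open \<sigma> v}"
      then obtain v where v: "v \<in> X" "z \<notin> minimal_open \<sigma> v" "w \<in> minimal_open \<sigma> v"
        unfolding open_hull_def by blast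
      then have "z \<notin> minimal_open \<sigma> w" using minimal_open_trans[of z \<sigma> w v] by blast
      moreover have "w \<in> X" using minimal_open_subset_space[OF assms v(1)] v(3) by blast
      ultimately show "w \<in> X - {v\<in>X. z \<in> minimal_open \<sigma> v}" by blast
    qed
  qed
  moreover have "open_hull \<sigma> {v\<in>X. z \<notin> minimal_open \<sigma> v} \<in> \<sigma>"
    by (rule open_hull_in[OF assms]) blast
  ultimately show ?thesis unfolding closed_in_top_def by auto
qed

lemma point_closure_subset_open_hull:
  assumes J: "closed_in_top X (tiebreak_topology X \<sigma> r) J" "z \<in> J"
    and U: "U \<in> tiebreak_topology X \<sigma> r" "J \<subseteq> U"
  shows "{v\<in>X. z \<in> minimal_open \<sigma> v} \<subseteq> open_hull \<sigma> U"
proof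
  fix v assume v: "v \<in> {v\<in>X. z \<in> minimal_open \<sigma> v}"
  show "v \<in> open_hull \<sigma> U"
  proof (cases "v \<in> minimal_open \<sigma> z")
    case True
    then show ?thesis using J(2) U(2) unfolding open_hull_def by blast
  next
    case False
    then have "tiebreak_spec_le \<sigma> r z v" using v unfolding tiebreak_spec_le_def by blast
    moreover have "z \<in> X" "X - J \<in> tiebreak_topology X \<sigma> r"
      using J unfolding closed_in_top_def by blast+
    ultimately have "v \<in> J"
      using v J(2) unfolding tiebreak_topology_def down_set_topology_def by blast
    then show ?thesis using U(2) subset_open_hull[of U \<sigma>] by blast
  qed
qed

lemma separated_tiebreak_topology_iff:
  assumes \<sigma>: "finite_topology X \<sigma>" and x: "x \<in> X" and y: "y \<in> X"
  shows "separated i X (tiebreak_topology X \<sigma> r) x y \<longleftrightarrow> separated i X \<sigma> x y"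
proof (cases "i = T1")
  case True
  have "separated T1 X (tiebreak_topology X \<sigma> r) x y \<longleftrightarrow>
      \<not> tiebreak_spec_le \<sigma> r y x \<and> \<not> tiebreak_spec_le \<sigma> r x y"
    using separated_T1_iff[OF finite_topology_tiebreak_topology[OF \<sigma>] x y]
    by (simp add: minimal_open_tiebreak_topology x y)
  also have "\<dots> \<longleftrightarrow> y \<notin> minimal_open \<sigma> x \<and> x \<notin> minimal_open \<sigma> y"
    unfolding tiebreak_spec_le_def by auto
  also have "\<dots> \<longleftrightarrow> separated T1 X \<sigma> x y"
    using separated_T1_iff[OF \<sigma> x y] by simp
  finally show ?thesis using True by simp
next
  case False
  interpret separation_transfer X "tiebreak_topology X \<sigma> r" X \<sigma> id "open_hull \<sigma>"
  proof
    fix U assume "U \<in> tiebreak_topology X \<sigma> r"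
    then have "U \<subseteq> X" unfolding tiebreak_topology_def down_set_topology_def by blast
    then show "open_hull \<sigma> U \<in> \<sigma>" by (rule open_hull_in[OF \<sigma>])
    show "id ` U \<subseteq> open_hull \<sigma> U" using subset_open_hull[of U \<sigma>] by simp
  next
    fix J z assume J: "closed_in_top X (tiebreak_topology X \<sigma> r) J" "z \<in> J"
    then have "z \<in> {v\<in>X. z \<in> minimal_open \<sigma> v}"
      using minimal_open_self[of z \<sigma>] unfolding closed_in_top_def by blast
    then show "\<exists>J'. closed_in_top X \<sigma> J' \<and> id z \<in> J' \<and>
        (\<forall>U\<in>tiebreak_topology X \<sigma> r. J \<subseteq> U \<longrightarrow> J' \<subseteq> open_hull \<sigma> U)"
      using closed_point_closure[OF \<sigma>, of z] point_closure_subset_open_hull[OF J]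
      by (intro exI[of _ "{v\<in>X. z \<in> minimal_open \<sigma> v}"]) simp
  qed (rule open_hull_disjoint[OF \<sigma>])
  show ?thesis
  proof
    assume "separated i X (tiebreak_topology X \<sigma> r) x y"
    then show "separated i X \<sigma> x y" using separated_transfer[OF False] by simp
  next
    assume "separated i X \<sigma> x y"
    then show "separated i X (tiebreak_topology X \<sigma> r) x y"
      by (rule separated_mono[OF topology_subset_tiebreak_topology[OF \<sigma>] x y])
  qed
qed

lemma inj_on_minimal_open_tiebreak_topology:
  assumes r: "inj_on r X"
  shows "inj_on (minimal_open (tiebreak_topology X \<sigma> r)) X"
proof (rule inj_onI)
  fix x y assume xy: "x \<in> X" "y \<in> X"
    and "minimal_open (tiebreak_topology X \<sigma> r) x = minimal_open (tiebreak_topology X \<sigma> r) y"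
  then have "{w\<in>X. tiebreak_spec_le \<sigma> r w x} = {w\<in>X. tiebreak_spec_le \<sigma> r w y}"
    by (simp add: minimal_open_tiebreak_topology)
  then have "tiebreak_spec_le \<sigma> r x y" "tiebreak_spec_le \<sigma> r y x"
    using xy tiebreak_spec_le_refl[of \<sigma> r x] tiebreak_spec_le_refl[of \<sigma> r y] by blast+
  then show "x = y" by (rule tiebreak_spec_le_antisym[OF r xy])
qed

lemma exists_T0_refinement:
  assumes \<sigma>: "finite_topology X \<sigma>"
  obtains \<tau> where "finite_topology X \<tau>"
    "\<And>i x y. x \<in> X \<Longrightarrow> y \<in> X \<Longrightarrow> separated i X \<tau> x y \<longleftrightarrow> separated i X \<sigma> x y"
    "inj_on (minimal_open \<tau>) X"
proof -
  obtain r :: "'a \<Rightarrow> nat" where "inj_on r X"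
    using \<sigma> finite_imp_inj_to_nat_seg unfolding finite_topology_def by metis
  then show ?thesis
    using that finite_topology_tiebreak_topology[OF \<sigma>] separated_tiebreak_topology_iff[OF \<sigma>]
      inj_on_minimal_open_tiebreak_topology by blast
qed

theorem lemma3p4:
  fixes i :: sep_axiom
    and V :: "'a set" and E :: "'a \<Rightarrow> 'a \<Rightarrow> bool"
    and X :: "'b set" and \<sigma> :: "'b set set"
  assumes "simple_graph V E"
    and "finite_topology X \<sigma>"
    and "graph_iso X (Gi_adj i X \<sigma>) V E"
  shows "\<exists>\<tau>. finite_topology V \<tau> \<and> graph_iso V (Gi_adj i V \<tau>) V E \<and>
           (\<forall>x\<in>V. \<forall>y\<in>V. x \<noteq> y \<longrightarrow> minimal_open \<tau> x \<noteq> minimal_open \<tau> y)"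
proof -
  obtain f where "bij_betw f X V"
    and adj: "\<And>x y. x \<in> X \<Longrightarrow> y \<in> X \<Longrightarrow> Gi_adj i X \<sigma> x y \<longleftrightarrow> E (f x) (f y)"
    using assms(3) unfolding graph_iso_def by blast
  then have f: "inj_on f X" and V: "V = f ` X" unfolding bij_betw_def by auto
  have \<sigma>X: "\<sigma> \<subseteq> Pow X" using assms(2) unfolding finite_topology_def by blast
  obtain \<tau> where \<tau>: "finite_topology V \<tau>"
    and sep: "\<And>x y. x \<in> V \<Longrightarrow> y \<in> V \<Longrightarrow> separated i V \<tau> x y \<longleftrightarrow> separated i V ((`) f ` \<sigma>) x y"
    and T0: "inj_on (minimal_open \<tau>) V"
    using exists_T0_refinement[OF finite_topology_image[OF assms(2) f]] unfolding V by metis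
  have "Gi_adj i V \<tau> (f x) (f y) \<longleftrightarrow> E (f x) (f y)" if "x \<in> X" "y \<in> X" for x y
    using sep[of "f x" "f y"] separated_image_iff[OF f \<sigma>X that] adj[OF that] inj_on_eq_iff[OF f that]
    unfolding Gi_adj_def V using that by simp
  then have "graph_iso V (Gi_adj i V \<tau>) V E"
    unfolding graph_iso_def V by (intro exI[of _ id]) auto
  then show ?thesis using \<tau> T0 unfolding inj_on_def by blast
qed

end
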